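(* Let $V$ be a finitely generated $\mathrm{FS}^{\mathrm{op}}$-module over $\mathbb Z$. Then there exists an integer $e_V\ge 1$ such that for every $n\ge0$ the torsion subgroup of $V_n$ is annihilated by $e_V$ (i.e. its exponent divides $e_V$).
   Context: $\mathrm{FS}$ is the category whose objects are the sets $[n]=\{1,\dots,n\}$, $n\ge0$, and whose morphisms are all surjective maps. An $\mathrm{FS}^{\mathrm{op}}$-module over a ring $R$ is a functor $V:\mathrm{FS}^{\mathrm{op}}\to R\text{-Mod}$, with $V_n:=V([n])$; equivalently a family of $RS_n$-modules $V_n$ with compatible maps $V_b\to V_a$ for each surjection $[a]\to[b]$. $V$ is finitely generated if there is a finite set of elements of $\bigcup_n V_n$ not contained in any proper $\mathrm{FS}^{\mathrm{op}}$-submodule of $V$. (Known fact used: over a Noetherian ring, submodules of finitely generated $\mathrm{FS}^{\mathrm{op}}$-modules are finitely generated.) *)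

theory Defs
  imports Main
begin

text \<open>The object [n] of FS is {1..n}; a morphism [a] -> [b] is a function
  f :: nat => nat with f ` {1..a} = {1..b} (only its values on {1..a} matter).\<close>

definition FS_mor :: "nat \<Rightarrow> nat \<Rightarrow> (nat \<Rightarrow> nat) \<Rightarrow> bool" where
  "FS_mor a b f \<longleftrightarrow> f ` {1..a} = {1..b}"

definition subgrp :: "'m::ab_group_add set \<Rightarrow> bool" where
  "subgrp A \<longleftrightarrow> 0 \<in> A \<and> (\<forall>x\<in>A. \<forall>y\<in>A. x + y \<in> A) \<and> (\<forall>x\<in>A. - x \<in> A)"

definition FSop_module ::
  "(nat \<Rightarrow> 'm::ab_group_add set) \<Rightarrow> (nat \<Rightarrow> nat \<Rightarrow> (nat \<Rightarrow> nat) \<Rightarrow> 'm \<Rightarrow> 'm) \<Rightarrow> bool" where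
  "FSop_module V act \<longleftrightarrow>
     (\<forall>n. subgrp (V n)) \<and>
     (\<forall>a b f x. FS_mor a b f \<longrightarrow> x \<in> V b \<longrightarrow> act a b f x \<in> V a) \<and>
     (\<forall>a b f x y. FS_mor a b f \<longrightarrow> x \<in> V b \<longrightarrow> y \<in> V b \<longrightarrow>
        act a b f (x + y) = act a b f x + act a b f y) \<and>
     (\<forall>a b f g x. FS_mor a b f \<longrightarrow> (\<forall>i\<in>{1..a}. f i = g i) \<longrightarrow> x \<in> V b \<longrightarrow>
        act a b f x = act a b g x) \<and>
     (\<forall>n x. x \<in> V n \<longrightarrow> act n n id x = x) \<and>
     (\<forall>a b c f g x. FS_mor a b f \<longrightarrow> FS_mor b c g \<longrightarrow> x \<in> V c \<longrightarrow>
        act a c (g \<circ> f) x = act a b f (act b c g x))"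

definition FSop_submodule ::
  "(nat \<Rightarrow> 'm::ab_group_add set) \<Rightarrow> (nat \<Rightarrow> nat \<Rightarrow> (nat \<Rightarrow> nat) \<Rightarrow> 'm \<Rightarrow> 'm)
     \<Rightarrow> (nat \<Rightarrow> 'm set) \<Rightarrow> bool" where
  "FSop_submodule V act W \<longleftrightarrow>
     (\<forall>n. W n \<subseteq> V n \<and> subgrp (W n)) \<and>
     (\<forall>a b f x. FS_mor a b f \<longrightarrow> x \<in> W b \<longrightarrow> act a b f x \<in> W a)"

definition FSop_fin_gen ::
  "(nat \<Rightarrow> 'm::ab_group_add set) \<Rightarrow> (nat \<Rightarrow> nat \<Rightarrow> (nat \<Rightarrow> nat) \<Rightarrow> 'm \<Rightarrow> 'm) \<Rightarrow> bool" where
  "FSop_fin_gen V act \<longleftrightarrow>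
     (\<exists>G. finite G \<and> (\<forall>(n, x)\<in>G. x \<in> V n) \<and>
        (\<forall>W. FSop_submodule V act W \<longrightarrow> (\<forall>(n, x)\<in>G. x \<in> W n) \<longrightarrow> (\<forall>n. W n = V n)))"

fun nsmul :: "nat \<Rightarrow> 'm::monoid_add \<Rightarrow> 'm" where
  "nsmul 0 x = 0"
| "nsmul (Suc k) x = x + nsmul k x"

definition torsion :: "'m::ab_group_add set \<Rightarrow> 'm set" where
  "torsion A = {x \<in> A. \<exists>k::nat. k \<ge> 1 \<and> nsmul k x = 0}"

end

theory Submission
  imports Defs "HOL-Library.Sublist" "HOL-Library.Countable_Set" "HOL-Library.List_Lexorder"
    "HOL-Library.Product_Lexorder" "HOL-Library.Ramsey"
begin

text \<open>The torsion elements form an FS-op-submodule \<open>T\<close> of \<open>V\<close>. Finitely generated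
  FS-op-modules over \<open>\<int>\<close> are Noetherian, so \<open>T\<close> is generated by finitely many elements, and
  the product \<open>e\<close> of their orders works: the elements killed by \<open>e\<close> form a submodule
  containing the generators.

  Noetherianity is proved by the Groebner method of Sam and Snowden. \<open>V\<close> is a quotient of a sum
  of free modules whose basis in degree \<open>n\<close> consists of the surjections \<open>[n] \<rightarrow> [d]\<close>, written
  as words. Precomposition with ordered surjections is strictly monotone for a lexicographic order
  of basis elements, and the resulting divisibility relation is a well-quasi-order by Higman's
  lemma, applied to an encoding of words that remembers the letters already seen. For a submodule
  \<open>K\<close>, record for each basis element the least positive leading coefficient of a lift of an
  element of \<open>K\<close>; it can only decrease along divisibility, so by Ramsey's theorem finitely many
  basis elements suffice to reduce every leading term, and the corresponding lifts generate \<open>K\<close>.\<close>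

lemma nsmul_add_left: "nsmul (a + b) x = nsmul a x + nsmul b (x::'m::ab_group_add)"
  by (induction a) (auto simp: add.assoc)

lemma nsmul_add_right: "nsmul k (x + y) = nsmul k x + nsmul k (y::'m::ab_group_add)"
  by (induction k) (auto simp: algebra_simps)

lemma nsmul_zero_right [simp]: "nsmul k (0::'m::ab_group_add) = 0"
  by (induction k) auto

lemma nsmul_minus_right: "nsmul k (- x) = - nsmul k (x::'m::ab_group_add)"
  by (induction k) (auto simp: algebra_simps)

lemma nsmul_diff_right: "nsmul k (x - y) = nsmul k x - nsmul k (y::'m::ab_group_add)"
  using nsmul_add_right[of k x "- y"] by (simp add: nsmul_minus_right)

lemma nsmul_mult: "nsmul (a * b) x = nsmul a (nsmul b (x::'m::ab_group_add))"
  by (induction a) (auto simp: nsmul_add_left nsmul_add_right)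

definition zsmul :: "int \<Rightarrow> 'm::ab_group_add \<Rightarrow> 'm" where
  "zsmul q x = (if 0 \<le> q then nsmul (nat q) x else - nsmul (nat (- q)) x)"

lemma zsmul_zero_left [simp]: "zsmul 0 x = 0"
  by (simp add: zsmul_def)

lemma zsmul_zero_right [simp]: "zsmul q (0::'m::ab_group_add) = 0"
  by (simp add: zsmul_def)

lemma zsmul_one_left [simp]: "zsmul 1 x = x"
  by (simp add: zsmul_def)

lemma zsmul_of_nat_diff: "zsmul (int a - int b) x = nsmul a x - nsmul b x"
proof (cases "b \<le> a")
  case True
  then have "nsmul a x = nsmul (a - b) x + nsmul b x"
    using nsmul_add_left[of "a - b" b x] by simp
  then show ?thesis using True by (simp add: zsmul_def of_nat_diff[symmetric] del: of_nat_diff)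
next
  case False
  then have "nsmul b x = nsmul (b - a) x + nsmul a x"
    using nsmul_add_left[of "b - a" a x] by simp
  moreover have "nat (int b - int a) = b - a" using False by simp
  ultimately show ?thesis using False by (simp add: zsmul_def)
qed

lemma zsmul_add_left: "zsmul (p + q) x = zsmul p x + zsmul q x"
proof -
  obtain a b c d where "p = int a - int b" "q = int c - int d"
    using int_diff_cases by metis
  moreover have "int a - int b + (int c - int d) = int (a + c) - int (b + d)" by simp
  ultimately show ?thesis
    by (simp only: zsmul_of_nat_diff nsmul_add_left) (simp add: algebra_simps)
qed

lemma zsmul_minus_left: "zsmul (- p) x = - zsmul p x"
  using zsmul_add_left[of p "- p" x] by (simp add: zsmul_def eq_neg_iff_add_eq_0 add.commute)

lemma zsmul_add_right: "zsmul q (x + y) = zsmul q x + zsmul q y"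
proof -
  obtain a b where "q = int a - int b" using int_diff_cases by blast
  then show ?thesis by (simp only: zsmul_of_nat_diff nsmul_add_right) (simp add: algebra_simps)
qed

lemma zsmul_mult: "zsmul (p * q) x = zsmul p (zsmul q x)"
proof -
  obtain a b c d where p: "p = int a - int b" and q: "q = int c - int d"
    using int_diff_cases by metis
  have "p * q = int (a * c + b * d) - int (a * d + b * c)"
    unfolding p q by (simp add: algebra_simps)
  then have "zsmul (p * q) x = nsmul (a * c + b * d) x - nsmul (a * d + b * c) x"
    by (simp only: zsmul_of_nat_diff)
  also have "\<dots> = zsmul p (zsmul q x)"
    unfolding p q by (simp only: zsmul_of_nat_diff nsmul_add_left nsmul_mult nsmul_diff_right)
      (simp add: algebra_simps)
  finally show ?thesis .
qed

lemma zsmul_sum_left: "zsmul (\<Sum>i\<in>I. f i) x = (\<Sum>i\<in>I. zsmul (f i) x)"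
  by (induction I rule: infinite_finite_induct) (simp_all add: zsmul_add_left)

lemma zsmul_sum_right: "zsmul q (\<Sum>i\<in>I. f i) = (\<Sum>i\<in>I. zsmul q (f i :: 'm::ab_group_add))"
  by (induction I rule: infinite_finite_induct) (simp_all add: zsmul_add_right)

lemma subgrp_nsmul: "subgrp S \<Longrightarrow> x \<in> S \<Longrightarrow> nsmul k x \<in> S"
  by (induction k) (auto simp: subgrp_def)

lemma subgrp_zsmul: "subgrp S \<Longrightarrow> x \<in> S \<Longrightarrow> zsmul q x \<in> S"
  by (auto simp: zsmul_def subgrp_nsmul subgrp_def)

lemma subgrp_sum: "subgrp S \<Longrightarrow> (\<And>i. i \<in> I \<Longrightarrow> f i \<in> S) \<Longrightarrow> sum f I \<in> S"
  by (induction I rule: infinite_finite_induct) (auto simp: subgrp_def)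

definition additive_on :: "'a::ab_group_add set \<Rightarrow> ('a \<Rightarrow> 'b::ab_group_add) \<Rightarrow> bool" where
  "additive_on S \<phi> \<longleftrightarrow> (\<forall>x\<in>S. \<forall>y\<in>S. \<phi> (x + y) = \<phi> x + \<phi> y)"

context
  fixes S and \<phi> :: "'a::ab_group_add \<Rightarrow> 'b::ab_group_add"
  assumes S: "subgrp S" and \<phi>: "additive_on S \<phi>"
begin

lemma additive_on_zero: "\<phi> 0 = 0"
  using S \<phi> unfolding subgrp_def additive_on_def by (metis add_0 add_cancel_right_right)

lemma additive_on_minus: "x \<in> S \<Longrightarrow> \<phi> (- x) = - \<phi> x"
  using S \<phi> additive_on_zero unfolding subgrp_def additive_on_def
  by (metis add_eq_0_iff2)

lemma additive_on_nsmul: "x \<in> S \<Longrightarrow> \<phi> (nsmul k x) = nsmul k (\<phi> x)"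
proof (induction k)
  case (Suc k)
  then have "\<phi> (x + nsmul k x) = \<phi> x + \<phi> (nsmul k x)"
    using \<phi> subgrp_nsmul[OF S] unfolding additive_on_def by blast
  with Suc show ?case by simp
qed (simp add: additive_on_zero)

lemma additive_on_zsmul: "x \<in> S \<Longrightarrow> \<phi> (zsmul q x) = zsmul q (\<phi> x)"
  by (simp add: zsmul_def additive_on_nsmul additive_on_minus S subgrp_nsmul)

lemma additive_on_sum: "(\<And>i. i \<in> I \<Longrightarrow> f i \<in> S) \<Longrightarrow> \<phi> (sum f I) = (\<Sum>i\<in>I. \<phi> (f i))"
proof (induction I rule: infinite_finite_induct)
  case (insert i I)
  then have "\<phi> (f i + sum f I) = \<phi> (f i) + \<phi> (sum f I)"
    using \<phi> subgrp_sum[OF S] unfolding additive_on_def by blast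
  with insert show ?case by simp
qed (simp_all add: additive_on_zero)

end

subsection \<open>Higman's lemma\<close>

definition bad_seq :: "'a set \<Rightarrow> (nat \<Rightarrow> 'a list) \<Rightarrow> bool" where
  "bad_seq A f \<longleftrightarrow> (\<forall>i. set (f i) \<subseteq> A) \<and> (\<forall>i j. i < j \<longrightarrow> \<not> subseq (f i) (f j))"

definition bad_prefix :: "'a set \<Rightarrow> 'a list list \<Rightarrow> bool" where
  "bad_prefix A p \<longleftrightarrow> (\<exists>f. bad_seq A f \<and> (\<forall>i<length p. f i = p ! i))"

definition min_bad_next :: "'a set \<Rightarrow> 'a list list \<Rightarrow> 'a list" where
  "min_bad_next A p = (SOME w. bad_prefix A (p @ [w]) \<and>
     (\<forall>w'. bad_prefix A (p @ [w']) \<longrightarrow> length w \<le> length w'))"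

primrec min_bad_prefix :: "'a set \<Rightarrow> nat \<Rightarrow> 'a list list" where
  "min_bad_prefix A 0 = []"
| "min_bad_prefix A (Suc n) = min_bad_prefix A n @ [min_bad_next A (min_bad_prefix A n)]"

lemma min_bad_next:
  assumes "bad_prefix A p"
  shows "bad_prefix A (p @ [min_bad_next A p])"
    and "bad_prefix A (p @ [w]) \<Longrightarrow> length (min_bad_next A p) \<le> length w"
proof -
  from assms obtain f where "bad_seq A f" "\<forall>i<length p. f i = p ! i"
    unfolding bad_prefix_def by blast
  then have "bad_prefix A (p @ [f (length p)])"
    unfolding bad_prefix_def by (intro exI[of _ f]) (auto simp: nth_append less_Suc_eq)
  then obtain w0 where "bad_prefix A (p @ [w0]) \<and>
      (\<forall>w'. bad_prefix A (p @ [w']) \<longrightarrow> length w0 \<le> length w')"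
    using ex_has_least_nat[of "\<lambda>w. bad_prefix A (p @ [w])" _ length] by blast
  then have "bad_prefix A (p @ [min_bad_next A p]) \<and>
      (\<forall>w'. bad_prefix A (p @ [w']) \<longrightarrow> length (min_bad_next A p) \<le> length w')"
    unfolding min_bad_next_def by (rule someI)
  then show "bad_prefix A (p @ [min_bad_next A p])"
    and "bad_prefix A (p @ [w]) \<Longrightarrow> length (min_bad_next A p) \<le> length w"
    by blast+
qed

lemma min_bad_prefix_eq: "min_bad_prefix A n = map (\<lambda>i. min_bad_next A (min_bad_prefix A i)) [0..<n]"
  by (induction n) auto

text \<open>Nash-Williams' minimal bad sequence: each term is as short as possible among all
  bad sequences extending the previous terms.\<close>

lemma minimal_bad_seq:
  assumes "bad_seq A f"
  obtains m where "bad_seq A m"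
    and "\<And>n w. bad_prefix A (map m [0..<n] @ [w]) \<Longrightarrow> length (m n) \<le> length w"
proof
  define m where "m n = min_bad_next A (min_bad_prefix A n)" for n
  have prefix: "min_bad_prefix A n = map m [0..<n]" for n
    unfolding m_def by (rule min_bad_prefix_eq)
  have "bad_prefix A []" using assms unfolding bad_prefix_def by auto
  then have bad_pre: "bad_prefix A (map m [0..<n])" for n
    unfolding prefix[symmetric] by (induction n) (auto simp: min_bad_next(1))
  have m_eq: "m n = min_bad_next A (map m [0..<n])" for n
    by (simp only: m_def[of n] prefix[of n])
  show "length (m n) \<le> length w" if "bad_prefix A (map m [0..<n] @ [w])" for n w
    using that min_bad_next(2)[OF bad_pre] m_eq by metis
  have agree: "\<exists>g. bad_seq A g \<and> (\<forall>i<n. g i = m i)" for n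
    using bad_pre[of n] unfolding bad_prefix_def by auto
  show "bad_seq A m"
    unfolding bad_seq_def
  proof (intro conjI allI impI)
    fix i
    obtain g where "bad_seq A g" "\<forall>k<Suc i. g k = m k" using agree[of "Suc i"] by blast
    then show "set (m i) \<subseteq> A" unfolding bad_seq_def by (metis lessI)
  next
    fix i j :: nat assume "i < j"
    moreover obtain g where "bad_seq A g" "\<forall>k<Suc j. g k = m k" using agree[of "Suc j"] by blast
    ultimately show "\<not> subseq (m i) (m j)" unfolding bad_seq_def by (metis less_Suc_eq)
  qed
qed

lemma bad_seq_drop_head:
  assumes m: "bad_seq A m" and \<phi>: "strict_mono \<phi>" and hd: "\<And>k. m (\<phi> k) = a # tl (m (\<phi> k))"
  shows "bad_seq A (\<lambda>i. if i < \<phi> 0 then m i else tl (m (\<phi> (i - \<phi> 0))))"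
    (is "bad_seq A ?g")
proof -
  have \<phi>_le: "\<phi> 0 \<le> \<phi> k" for k using \<phi> by (simp add: strict_mono_less_eq)
  have "set (?g i) \<subseteq> A" for i
  proof -
    have "set (tl (m (\<phi> k))) \<subseteq> set (m (\<phi> k))" for k
      by (subst (2) hd) (rule set_subset_Cons)
    then show ?thesis using m unfolding bad_seq_def by (auto simp del: list.sel)
  qed
  moreover have "\<not> subseq (?g i) (?g j)" if ij: "i < j" for i j
  proof
    assume sub: "subseq (?g i) (?g j)"
    consider "j < \<phi> 0" | "i < \<phi> 0" "\<phi> 0 \<le> j" | "\<phi> 0 \<le> i" by linarith
    then show False
    proof cases
      case 1
      with sub ij m show False unfolding bad_seq_def by auto
    next
      case 2
      with sub have "subseq (m i) (a # tl (m (\<phi> (j - \<phi> 0))))"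
        by (simp add: list_emb_Cons)
      then have "subseq (m i) (m (\<phi> (j - \<phi> 0)))" by (subst hd)
      moreover have "i < \<phi> (j - \<phi> 0)" using 2 \<phi>_le[of "j - \<phi> 0"] by simp
      ultimately show False using m unfolding bad_seq_def by blast
    next
      case 3
      with sub ij have "subseq (a # tl (m (\<phi> (i - \<phi> 0)))) (a # tl (m (\<phi> (j - \<phi> 0))))"
        by simp
      then have "subseq (m (\<phi> (i - \<phi> 0))) (m (\<phi> (j - \<phi> 0)))" using hd by metis
      moreover have "\<phi> (i - \<phi> 0) < \<phi> (j - \<phi> 0)" using \<phi> ij 3 by (simp add: strict_mono_less)
      ultimately show False using m unfolding bad_seq_def by blast
    qed
  qed
  ultimately show ?thesis unfolding bad_seq_def by blast
qed

theorem higman: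
  fixes f :: "nat \<Rightarrow> 'a list"
  assumes A: "finite A" and f: "\<And>i. set (f i) \<subseteq> A"
  shows "\<exists>i j. i < j \<and> subseq (f i) (f j)"
proof (rule ccontr)
  assume "\<not> ?thesis"
  with f have "bad_seq A f" unfolding bad_seq_def by blast
  obtain m where m: "bad_seq A m"
    and minimal: "\<And>n w. bad_prefix A (map m [0..<n] @ [w]) \<Longrightarrow> length (m n) \<le> length w"
    using minimal_bad_seq[OF \<open>bad_seq A f\<close>] by blast
  have ne: "m i \<noteq> []" for i
    using m unfolding bad_seq_def by (metis lessI list_emb_Nil)
  have "hd (m i) \<in> A" for i using m ne unfolding bad_seq_def by (meson hd_in_set subsetD)
  then have "finite (range (\<lambda>i. hd (m i)))" using A by (meson finite_subset image_subset_iff)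
  then obtain a where inf: "infinite {i. hd (m i) = a}"
    using pigeonhole_infinite[of UNIV "\<lambda>i. hd (m i)"] by auto
  define \<phi> where "\<phi> = enumerate {i. hd (m i) = a}"
  have \<phi>: "strict_mono \<phi>" unfolding \<phi>_def using inf by (rule strict_mono_enumerate)
  have hd: "m (\<phi> k) = a # tl (m (\<phi> k))" for k
  proof -
    have "hd (m (\<phi> k)) = a" using enumerate_in_set[OF inf, of k] unfolding \<phi>_def by simp
    with ne[of "\<phi> k"] show ?thesis by (cases "m (\<phi> k)") auto
  qed
  let ?g = "\<lambda>i. if i < \<phi> 0 then m i else tl (m (\<phi> (i - \<phi> 0)))"
  have "?g i = (map m [0..<\<phi> 0] @ [tl (m (\<phi> 0))]) ! i" if "i < Suc (\<phi> 0)" for i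
    using that by (cases "i = \<phi> 0") (auto simp: nth_append)
  then have "bad_prefix A (map m [0..<\<phi> 0] @ [tl (m (\<phi> 0))])"
    unfolding bad_prefix_def using bad_seq_drop_head[OF m \<phi> hd] by auto
  from minimal[OF this] ne[of "\<phi> 0"] show False by (cases "m (\<phi> 0)") auto
qed

lemma good_antitone_eq:
  fixes g :: "'a \<Rightarrow> nat" and s :: "nat \<Rightarrow> 'a"
  assumes good: "\<And>s :: nat \<Rightarrow> 'a. (\<And>i. s i \<in> S) \<Longrightarrow> \<exists>i j. i < j \<and> D (s i) (s j)"
    and antitone: "\<And>x y. x \<in> S \<Longrightarrow> y \<in> S \<Longrightarrow> D x y \<Longrightarrow> g y \<le> g x"
    and s: "\<And>i. s i \<in> S"
  shows "\<exists>i j. i < j \<and> D (s i) (s j) \<and> g (s i) = g (s j)"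
proof -
  define colour where "colour X = (if D (s (Min X)) (s (Max X)) then 0 else 1::nat)" for X
  have "\<forall>x\<in>UNIV. \<forall>y\<in>UNIV. x \<noteq> y \<longrightarrow> colour {x, y} < 2" by (simp add: colour_def)
  from Ramsey2[OF infinite_UNIV_nat this] obtain Y t where Y: "infinite Y" "t < 2"
    and hom: "\<forall>x\<in>Y. \<forall>y\<in>Y. x \<noteq> y \<longrightarrow> colour {x, y} = t"
    by blast
  define \<psi> where "\<psi> = enumerate Y"
  have \<psi>: "strict_mono \<psi>" unfolding \<psi>_def using Y(1) by (rule strict_mono_enumerate)
  have colour_\<psi>: "colour {\<psi> i, \<psi> j} = t" if "i < j" for i j
  proof -
    have "\<psi> i < \<psi> j" using \<psi> that by (simp add: strict_mono_less)
    then show ?thesis using hom enumerate_in_set[OF Y(1)] unfolding \<psi>_def by auto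
  qed
  have colour_eq: "colour {\<psi> i, \<psi> j} = (if D (s (\<psi> i)) (s (\<psi> j)) then 0 else 1)" if "i < j" for i j
  proof -
    have "\<psi> i < \<psi> j" using \<psi> that by (simp add: strict_mono_less)
    then show ?thesis by (simp add: colour_def)
  qed
  show ?thesis
  proof (cases "t = 0")
    case False
    obtain i j where "i < j" "D (s (\<psi> i)) (s (\<psi> j))" using good[of "s \<circ> \<psi>"] s by auto
    then show ?thesis using colour_\<psi>[of i j] colour_eq[of i j] False by simp
  next
    case True
    then have chain: "D (s (\<psi> i)) (s (\<psi> j))" if "i < j" for i j
      using colour_\<psi>[OF that] colour_eq[OF that] by (simp split: if_splits)
    have "\<exists>k. g (s (\<psi> (Suc k))) = g (s (\<psi> k))"
    proof (rule ccontr)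
      assume "\<not> ?thesis"
      then have dec: "g (s (\<psi> (Suc k))) < g (s (\<psi> k))" for k
        using antitone[OF s s chain[of k "Suc k"]] by (simp add: order_less_le)
      have "g (s (\<psi> k)) + k \<le> g (s (\<psi> 0))" for k
      proof (induction k)
        case (Suc k)
        then show ?case using dec[of k] by linarith
      qed simp
      from this[of "Suc (g (s (\<psi> 0)))"] show False by simp
    qed
    then obtain k where "g (s (\<psi> (Suc k))) = g (s (\<psi> k))" ..
    moreover have "\<psi> k < \<psi> (Suc k)" using \<psi> by (simp add: strict_mono_less)
    ultimately show ?thesis using chain[of k "Suc k"]
      by (intro exI[of _ "\<psi> k"] exI[of _ "\<psi> (Suc k)"]) simp
  qed
qed

lemma finite_basis_if_good:
  assumes good: "\<And>s :: nat \<Rightarrow> 'a. (\<And>i. s i \<in> S) \<Longrightarrow> \<exists>i j. i < j \<and> R (s i) (s j)"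
  shows "\<exists>F. finite F \<and> F \<subseteq> S \<and> (\<forall>x\<in>S. \<exists>y\<in>F. R y x)"
proof (rule ccontr)
  assume no_basis: "\<not> ?thesis"
  define next_elt where "next_elt p = (SOME x. x \<in> S \<and> (\<forall>y\<in>set p. \<not> R y x))" for p
  have next_elt: "next_elt p \<in> S \<and> (\<forall>y\<in>set p. \<not> R y (next_elt p))" if "set p \<subseteq> S" for p
  proof -
    have "\<exists>x. x \<in> S \<and> (\<forall>y\<in>set p. \<not> R y x)"
      using no_basis[unfolded not_ex, rule_format, of "set p"] that by auto
    then show ?thesis unfolding next_elt_def by (rule someI_ex)
  qed
  define prefix where "prefix = rec_nat [] (\<lambda>_ p. p @ [next_elt p])"
  define s where "s k = next_elt (prefix k)" for k
  have prefix: "set (prefix k) = s ` {..<k}" for k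
    by (induction k) (simp_all add: prefix_def s_def lessThan_Suc)
  have "s k \<in> S \<and> (\<forall>i<k. \<not> R (s i) (s k))" for k
  proof (induction k rule: less_induct)
    case (less k)
    then have "set (prefix k) \<subseteq> S" by (auto simp: prefix)
    then show ?case using next_elt[of "prefix k"] by (simp add: s_def[symmetric] prefix)
  qed
  then show False using good[of s] by blast
qed

subsection \<open>Words and ordered surjections\<close>

text \<open>A word \<open>w\<close> of length \<open>n\<close> with \<open>set w = {1..d}\<close> stands for the surjection
  \<open>[n] \<rightarrow> [d]\<close>, \<open>i \<mapsto> w ! (i - 1)\<close>; precomposing it with \<open>h : [m] \<rightarrow> [n]\<close> gives the
  word \<open>word_comp w h m\<close>.\<close>

definition word_fun :: "nat list \<Rightarrow> nat \<Rightarrow> nat" where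
  "word_fun w i = w ! (i - 1)"

definition word_comp :: "nat list \<Rightarrow> (nat \<Rightarrow> nat) \<Rightarrow> nat \<Rightarrow> nat list" where
  "word_comp w h m = map (\<lambda>i. w ! (h i - 1)) [1..<Suc m]"

text \<open>Together with \<open>FS_mor m n h\<close> this says that \<open>h\<close> is an ordered surjection in the
  sense of Sam and Snowden: the first occurrences of the values of \<open>h\<close> come in increasing
  order.\<close>

definition ordered_map :: "nat \<Rightarrow> (nat \<Rightarrow> nat) \<Rightarrow> bool" where
  "ordered_map m h \<longleftrightarrow> (\<forall>q\<in>{1..m}. h q \<in> h ` {1..<q} \<or> (\<forall>p\<in>{1..<q}. h p < h q))"

lemma length_word_comp [simp]: "length (word_comp w h m) = m"
  by (simp add: word_comp_def)

lemma nth_word_comp: "i < m \<Longrightarrow> word_comp w h m ! i = w ! (h (Suc i) - 1)"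
  by (simp add: word_comp_def del: upt_Suc)

lemma word_fun_word_comp: "i \<in> {1..m} \<Longrightarrow> word_fun (word_comp w h m) i = word_fun w (h i)"
  by (auto simp: word_fun_def nth_word_comp)

lemma set_eq_word_fun_image: "set w = word_fun w ` {1..length w}"
proof -
  have "set w = (\<lambda>i. w ! i) ` {..<length w}" by (auto simp: in_set_conv_nth)
  also have "\<dots> = word_fun w ` Suc ` {..<length w}" by (simp add: image_image word_fun_def)
  finally show ?thesis by (simp only: image_Suc_lessThan)
qed

lemma FS_mor_word_fun: "set w = {1..d} \<Longrightarrow> FS_mor (length w) d (word_fun w)"
  using set_eq_word_fun_image[of w] by (simp add: FS_mor_def)

lemma set_word_comp:
  assumes "FS_mor m (length w) h"
  shows "set (word_comp w h m) = set w"
proof -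
  have "set (word_comp w h m) = word_fun w ` h ` {1..m}"
    by (auto simp: word_comp_def word_fun_def atLeastLessThanSuc_atLeastAtMost simp del: upt_Suc)
  then show ?thesis using assms set_eq_word_fun_image[of w] by (simp add: FS_mor_def)
qed

lemma less_list_same_length_iff:
  fixes x y :: "'a::linorder list"
  assumes "length x = length y"
  shows "x < y \<longleftrightarrow> (\<exists>i<length x. (\<forall>j<i. x ! j = y ! j) \<and> x ! i < y ! i)"
proof -
  have "take i x = take i y \<longleftrightarrow> (\<forall>j<i. x ! j = y ! j)" if "i < length x" for i
    using that assms by (auto simp: list_eq_iff_nth_eq min_def)
  then show ?thesis
    using assms unfolding list_less_def lexord_take_index_conv by auto
qed

lemma ordered_map_first_occurrence:
  assumes h: "FS_mor m n h" "ordered_map m h" and j: "j \<in> {1..n}"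
  obtains k where "k \<in> {1..m}" "h k = j" "\<And>q. q \<in> {1..<k} \<Longrightarrow> h q < j"
proof
  have "j \<in> h ` {1..m}" using h(1) j by (simp add: FS_mor_def)
  then have ex: "\<exists>q. q \<in> {1..m} \<and> h q = j" by blast
  define k where "k = (LEAST q. q \<in> {1..m} \<and> h q = j)"
  show k: "k \<in> {1..m}" "h k = j" using LeastI_ex[OF ex] unfolding k_def by auto
  have "h k \<notin> h ` {1..<k}"
  proof
    assume "h k \<in> h ` {1..<k}"
    then obtain q where "q \<in> {1..<k}" "h q = j" using k by auto
    moreover from this have "k \<le> q" using k unfolding k_def by (intro Least_le) auto
    ultimately show False by auto
  qed
  then show "h q < j" if "q \<in> {1..<k}" for q
    using h(2) k that unfolding ordered_map_def by blast
qed

lemma word_comp_strict_mono: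
  assumes h: "FS_mor m n h" "ordered_map m h"
    and len: "length w1 = n" "length w2 = n" and less: "w1 < w2"
  shows "word_comp w1 h m < word_comp w2 h m"
proof -
  obtain i where i: "i < n" "\<forall>j<i. w1 ! j = w2 ! j" "w1 ! i < w2 ! i"
    using less len less_list_same_length_iff[of w1 w2] by auto
  obtain k where k: "k \<in> {1..m}" "h k = Suc i" and before: "\<And>q. q \<in> {1..<k} \<Longrightarrow> h q < Suc i"
    using ordered_map_first_occurrence[OF h, of "Suc i"] i(1) by auto
  have "word_comp w1 h m ! j = word_comp w2 h m ! j" if "j < k - 1" for j
  proof -
    have "h (Suc j) < Suc i" "h (Suc j) \<in> {1..n}"
      using before[of "Suc j"] h(1) that k(1) by (auto simp: FS_mor_def)
    moreover have "j < m" using that k(1) by auto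
    ultimately show ?thesis using i(2) by (auto simp: nth_word_comp)
  qed
  moreover have "word_comp w1 h m ! (k - 1) < word_comp w2 h m ! (k - 1)"
  proof -
    have "k - 1 < m" "Suc (k - 1) = k" using k(1) by auto
    then show ?thesis using k(2) i(3) by (simp only: nth_word_comp) simp
  qed
  ultimately show ?thesis
    using k(1) by (subst less_list_same_length_iff) (auto intro!: exI[of _ "k - 1"])
qed

text \<open>Subsequence embeddings of prefix encodings yield ordered surjections; this is how
  Higman's lemma enters.\<close>

definition prefix_enc :: "nat list \<Rightarrow> (nat \<times> nat set) list" where
  "prefix_enc w = map (\<lambda>i. (w ! i, set (take i w))) [0..<length w]"

lemma length_prefix_enc [simp]: "length (prefix_enc w) = length w"
  by (simp add: prefix_enc_def)

lemma nth_prefix_enc: "i < length w \<Longrightarrow> prefix_enc w ! i = (w ! i, set (take i w))"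
  by (simp add: prefix_enc_def)

lemma set_prefix_enc: "set (prefix_enc w) \<subseteq> set w \<times> Pow (set w)"
  by (auto simp: prefix_enc_def dest: in_set_takeD)

lemma list_emb_indices:
  "list_emb P xs ys \<Longrightarrow> \<exists>p. (\<forall>k<length xs. p k < length ys \<and> P (xs ! k) (ys ! p k)) \<and>
      (\<forall>k1 k2. k1 < k2 \<longrightarrow> k2 < length xs \<longrightarrow> p k1 < p k2)"
proof (induction rule: list_emb.induct)
  case (list_emb_Cons xs ys y)
  then obtain p where "\<forall>k<length xs. p k < length ys \<and> P (xs ! k) (ys ! p k)"
    "\<forall>k1 k2. k1 < k2 \<longrightarrow> k2 < length xs \<longrightarrow> p k1 < p k2" by blast
  then show ?case by (intro exI[of _ "\<lambda>k. Suc (p k)"]) auto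
next
  case (list_emb_Cons2 x y xs ys)
  then obtain p where p: "\<forall>k<length xs. p k < length ys \<and> P (xs ! k) (ys ! p k)"
    "\<forall>k1 k2. k1 < k2 \<longrightarrow> k2 < length xs \<longrightarrow> p k1 < p k2" by blast
  define p' where "p' k = (case k of 0 \<Rightarrow> 0 | Suc j \<Rightarrow> Suc (p j))" for k
  have "p' k < length (y # ys) \<and> P ((x # xs) ! k) ((y # ys) ! p' k)" if "k < length (x # xs)" for k
    using that p(1) list_emb_Cons2.hyps(1) by (cases k) (auto simp: p'_def)
  moreover have "p' k1 < p' k2" if "k1 < k2" "k2 < length (x # xs)" for k1 k2
    using that p(2) by (cases k1; cases k2) (auto simp: p'_def)
  ultimately show ?case by blast
qed simp

context
  fixes u v :: "nat list" and p :: "nat \<Rightarrow> nat"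
  assumes same_letters: "set u = set v"
    and p: "\<And>k. k < length u \<Longrightarrow> p k < length v \<and> u ! k = v ! p k \<and> set (take k u) = set (take (p k) v)"
    and p_mono: "\<And>k1 k2. k1 < k2 \<Longrightarrow> k2 < length u \<Longrightarrow> p k1 < p k2"
begin

text \<open>For a position \<open>q\<close> of \<open>v\<close> (counted from 1), the last position of \<open>u\<close> that is
  embedded before \<open>q\<close> and carries the same letter.\<close>

definition last_match :: "nat \<Rightarrow> nat" where
  "last_match q = (GREATEST k. k < length u \<and> p k < q \<and> u ! k = v ! (q - 1))"

lemma p_mono_iff: "k1 < length u \<Longrightarrow> k2 < length u \<Longrightarrow> p k1 < p k2 \<longleftrightarrow> k1 < k2"
  by (cases k1 k2 rule: linorder_cases) (auto dest: p_mono)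

lemma match_exists:
  assumes q: "q \<in> {1..length v}"
  shows "\<exists>k. k < length u \<and> p k < q \<and> u ! k = v ! (q - 1)"
proof -
  have "u \<noteq> []" using q same_letters by auto
  then have "p 0 = 0" using p[of 0] by auto
  define K where "K = (GREATEST k. k < length u \<and> p k < q)"
  have "0 < length u \<and> p 0 < q" using \<open>u \<noteq> []\<close> \<open>p 0 = 0\<close> q by auto
  then have K: "K < length u \<and> p K < q"
    unfolding K_def by (rule GreatestI_nat[of _ 0 "length u"]) auto
  have "v ! (q - 1) \<in> set (take (Suc K) u)"
  proof (cases "Suc K < length u")
    case True
    have "\<not> p (Suc K) < q"
    proof
      assume "p (Suc K) < q"
      then have "Suc K \<le> K" using True unfolding K_def by (intro Greatest_le_nat[of _ _ "length u"]) auto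
      then show False by simp
    qed
    then have "q - 1 < length (take (p (Suc K)) v)" using True q p[of "Suc K"] by auto
    then have "v ! (q - 1) \<in> set (take (p (Suc K)) v)"
      using nth_mem[of "q - 1" "take (p (Suc K)) v"] by simp
    then show ?thesis using p[OF True] by simp
  next
    case False
    then have "take (Suc K) u = u" using K by simp
    moreover have "v ! (q - 1) \<in> set v" using q by auto
    ultimately show ?thesis using same_letters by simp
  qed
  then obtain k where "k < Suc K" "u ! k = v ! (q - 1)" by (auto simp: in_set_conv_nth)
  moreover have "p k \<le> p K" using \<open>k < Suc K\<close> K p_mono by (cases "k = K") (auto intro: less_imp_le)
  ultimately show ?thesis using K by (intro exI[of _ k]) auto
qed

lemma last_match:
  assumes "q \<in> {1..length v}"
  shows "last_match q < length u" "p (last_match q) < q" "u ! last_match q = v ! (q - 1)"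
  using GreatestI_ex_nat[OF match_exists[OF assms], of "length u"]
  unfolding last_match_def by auto

lemma last_match_greatest: "k < length u \<Longrightarrow> p k < q \<Longrightarrow> u ! k = v ! (q - 1) \<Longrightarrow> k \<le> last_match q"
  unfolding last_match_def by (rule Greatest_le_nat[of _ _ "length u"]) auto

lemma last_match_Suc_p:
  assumes k: "k < length u"
  shows "last_match (Suc (p k)) = k"
proof -
  have q: "Suc (p k) \<in> {1..length v}" using p[OF k] by auto
  have "k \<le> last_match (Suc (p k))" using p[OF k] by (intro last_match_greatest[OF k]) auto
  moreover have "\<not> k < last_match (Suc (p k))"
    using last_match(1,2)[OF q] p_mono_iff[OF k, of "last_match (Suc (p k))"] by auto
  ultimately show ?thesis by simp
qed

lemma ordered_surj_last_match:
  "FS_mor (length v) (length u) (Suc \<circ> last_match)"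
  "ordered_map (length v) (Suc \<circ> last_match)"
  "word_comp u (Suc \<circ> last_match) (length v) = v"
proof -
  have "(Suc \<circ> last_match) ` {1..length v} \<subseteq> {1..length u}"
    using last_match(1) by (intro image_subsetI) (simp add: Suc_le_eq)
  moreover have "j \<in> (Suc \<circ> last_match) ` {1..length v}" if "j \<in> {1..length u}" for j
  proof (rule image_eqI)
    have "j - 1 < length u" using that by auto
    then show "Suc (p (j - 1)) \<in> {1..length v}" "j = (Suc \<circ> last_match) (Suc (p (j - 1)))"
      using p[of "j - 1"] last_match_Suc_p[of "j - 1"] that by auto
  qed
  ultimately show "FS_mor (length v) (length u) (Suc \<circ> last_match)"
    unfolding FS_mor_def by blast
  show "word_comp u (Suc \<circ> last_match) (length v) = v"
  proof (rule nth_equalityI)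
    fix i assume "i < length (word_comp u (Suc \<circ> last_match) (length v))"
    then have "Suc i \<in> {1..length v}" by simp
    then show "word_comp u (Suc \<circ> last_match) (length v) ! i = v ! i"
      using last_match(3) by (simp add: nth_word_comp)
  qed simp
  show "ordered_map (length v) (Suc \<circ> last_match)"
    unfolding ordered_map_def
  proof
    fix q assume q: "q \<in> {1..length v}"
    let ?k = "last_match q"
    show "(Suc \<circ> last_match) q \<in> (Suc \<circ> last_match) ` {1..<q} \<or>
        (\<forall>q'\<in>{1..<q}. (Suc \<circ> last_match) q' < (Suc \<circ> last_match) q)"
    proof (cases "Suc (p ?k) = q")
      case True
      have "last_match q' < ?k" if q': "q' \<in> {1..<q}" for q'
      proof -
        have q'_range: "q' \<in> {1..length v}" using q' q by auto
        have "p (last_match q') < p ?k" using last_match(2)[OF q'_range] q' True by auto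
        then show ?thesis using last_match(1)[OF q'_range] last_match(1)[OF q] p_mono_iff by blast
      qed
      then show ?thesis by (intro disjI2) simp
    next
      case False
      then have "Suc (p ?k) \<in> {1..<q}" using last_match(2)[OF q] by auto
      moreover have "last_match (Suc (p ?k)) = ?k" using last_match_Suc_p last_match(1)[OF q] .
      ultimately show ?thesis by (intro disjI1 image_eqI[of _ _ "Suc (p ?k)"]) simp_all
    qed
  qed
qed
end

lemma ordered_surj_of_prefix_enc_emb:
  assumes "set u = set v" and "subseq (prefix_enc u) (prefix_enc v)"
  obtains h where "FS_mor (length v) (length u) h" "ordered_map (length v) h"
    "word_comp u h (length v) = v"
proof -
  obtain p where p: "\<forall>k<length u. p k < length v \<and> prefix_enc u ! k = prefix_enc v ! p k"
    and mono: "\<forall>k1 k2. k1 < k2 \<longrightarrow> k2 < length u \<longrightarrow> p k1 < p k2"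
    using list_emb_indices[OF assms(2)] by auto
  have p': "p k < length v \<and> u ! k = v ! p k \<and> set (take k u) = set (take (p k) v)" if "k < length u" for k
  proof -
    have "p k < length v" "prefix_enc u ! k = prefix_enc v ! p k" using p that by blast+
    then show ?thesis using that by (simp add: nth_prefix_enc)
  qed
  have mono': "p k1 < p k2" if "k1 < k2" "k2 < length u" for k1 k2 using mono that by blast
  show ?thesis using ordered_surj_last_match[OF assms(1) p' mono'] by (rule that)
qed

locale FSop_mod =
  fixes V :: "nat \<Rightarrow> 'm::ab_group_add set"
    and act :: "nat \<Rightarrow> nat \<Rightarrow> (nat \<Rightarrow> nat) \<Rightarrow> 'm \<Rightarrow> 'm"
  assumes module: "FSop_module V act"
begin

lemma subgrp_V: "subgrp (V n)"
  using module by (simp add: FSop_module_def)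

lemma act_in: "FS_mor a b f \<Longrightarrow> x \<in> V b \<Longrightarrow> act a b f x \<in> V a"
  using module by (simp add: FSop_module_def)

lemma act_additive: "FS_mor a b f \<Longrightarrow> additive_on (V b) (act a b f)"
  using module by (simp add: FSop_module_def additive_on_def)

lemma act_cong:
  assumes "FS_mor a b f" "\<And>i. i \<in> {1..a} \<Longrightarrow> f i = g i" "x \<in> V b"
  shows "act a b f x = act a b g x"
proof -
  have "\<forall>i\<in>{1..a}. f i = g i" using assms(2) by blast
  then show ?thesis using module assms(1,3) unfolding FSop_module_def by blast
qed

lemma act_id: "x \<in> V n \<Longrightarrow> act n n id x = x"
  using module by (simp add: FSop_module_def)

lemma act_comp: "FS_mor a b f \<Longrightarrow> FS_mor b c g \<Longrightarrow> x \<in> V c \<Longrightarrow>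
    act a c (g \<circ> f) x = act a b f (act b c g x)"
  using module unfolding FSop_module_def by blast

lemma act_nsmul: "FS_mor a b f \<Longrightarrow> x \<in> V b \<Longrightarrow> act a b f (nsmul k x) = nsmul k (act a b f x)"
  by (rule additive_on_nsmul[OF subgrp_V act_additive])

lemma act_zero: "FS_mor a b f \<Longrightarrow> act a b f 0 = 0"
  by (rule additive_on_zero[OF subgrp_V act_additive])

lemma FSop_module_submodule:
  assumes "FSop_submodule V act W"
  shows "FSop_module W act"
proof -
  have W: "\<And>n. W n \<subseteq> V n" "\<And>n. subgrp (W n)"
    and act_W: "\<And>a b f x. FS_mor a b f \<Longrightarrow> x \<in> W b \<Longrightarrow> act a b f x \<in> W a"
    using assms unfolding FSop_submodule_def by blast+
  show ?thesis
    unfolding FSop_module_def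
  proof (intro conjI allI impI)
    fix a b f x y assume "FS_mor a b f" "x \<in> W b" "y \<in> W b"
    then show "act a b f (x + y) = act a b f x + act a b f y"
      using act_additive W(1) unfolding additive_on_def by blast
  next
    fix a b f g x assume "FS_mor a b f" "\<forall>i\<in>{1..a}. f i = g i" "x \<in> W b"
    then show "act a b f x = act a b g x" using act_cong W(1) by blast
  next
    fix a b c f g x assume "FS_mor a b f" "FS_mor b c g" "x \<in> W c"
    then show "act a c (g \<circ> f) x = act a b f (act b c g x)" using act_comp W(1) by blast
  qed (use W act_W act_id in \<open>auto simp: subset_iff\<close>)
qed

lemma FSop_submodule_torsion: "FSop_submodule V act (\<lambda>n. torsion (V n))"
  unfolding FSop_submodule_def
proof (intro conjI allI impI)
  fix n
  show "torsion (V n) \<subseteq> V n" by (auto simp: torsion_def)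
  show "subgrp (torsion (V n))"
    unfolding subgrp_def
  proof (intro conjI ballI)
    show "0 \<in> torsion (V n)"
      using subgrp_V by (auto simp: torsion_def subgrp_def intro: exI[of _ 1])
  next
    fix x y assume "x \<in> torsion (V n)" "y \<in> torsion (V n)"
    then obtain k l where xy: "x \<in> V n" "y \<in> V n" and "k \<ge> 1" "nsmul k x = 0" "l \<ge> 1" "nsmul l y = 0"
      by (auto simp: torsion_def)
    moreover have "nsmul (l * k) y = 0"
      using \<open>nsmul l y = 0\<close> by (simp add: mult.commute[of l k] nsmul_mult)
    ultimately have "nsmul (l * k) x = 0" "nsmul (l * k) y = 0" "l * k \<ge> 1"
      by (simp_all add: nsmul_mult)
    then show "x + y \<in> torsion (V n)"
      using subgrp_V xy by (auto simp: torsion_def subgrp_def nsmul_add_right intro!: exI[of _ "l * k"])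
  next
    fix x assume "x \<in> torsion (V n)"
    then show "- x \<in> torsion (V n)"
      using subgrp_V by (auto simp: torsion_def subgrp_def nsmul_minus_right)
  qed
next
  fix a b f x assume f: "FS_mor a b f" and "x \<in> torsion (V b)"
  then obtain k where "x \<in> V b" "k \<ge> 1" "nsmul k x = 0" by (auto simp: torsion_def)
  then have "nsmul k (act a b f x) = 0" using act_nsmul[OF f] act_zero[OF f] by metis
  then show "act a b f x \<in> torsion (V a)"
    using act_in[OF f \<open>x \<in> V b\<close>] \<open>k \<ge> 1\<close> by (auto simp: torsion_def)
qed

lemma bounded_exponent_if_torsion:
  assumes fg: "FSop_fin_gen V act" and tors: "\<And>n. torsion (V n) = V n"
  shows "\<exists>e::nat. e \<ge> 1 \<and> (\<forall>n. \<forall>x\<in>V n. nsmul e x = 0)"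
proof -
  obtain G where G: "finite G" "\<forall>(n, x)\<in>G. x \<in> V n"
    and gen: "\<forall>W. FSop_submodule V act W \<longrightarrow> (\<forall>(n, x)\<in>G. x \<in> W n) \<longrightarrow> (\<forall>n. W n = V n)"
    using fg unfolding FSop_fin_gen_def by blast
  have "\<exists>k. k \<ge> 1 \<and> nsmul k (snd g) = 0" if "g \<in> G" for g
  proof -
    have "snd g \<in> torsion (V (fst g))" using G(2) that tors by auto
    then show ?thesis by (simp add: torsion_def)
  qed
  then obtain ord where ord: "\<And>g. g \<in> G \<Longrightarrow> ord g \<ge> 1 \<and> nsmul (ord g) (snd g) = 0"
    by metis
  define e where "e = (\<Prod>g\<in>G. ord g)"
  have "e \<ge> 1" unfolding e_def using ord by (simp add: Suc_le_eq prod_pos)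
  define W where "W n = {x \<in> V n. nsmul e x = 0}" for n
  have "subgrp (W n)" for n
    using subgrp_V[of n] unfolding W_def subgrp_def by (simp add: nsmul_add_right nsmul_minus_right)
  moreover have "act a b f x \<in> W a" if "FS_mor a b f" "x \<in> W b" for a b f x
    using that act_in[OF that(1)] act_nsmul[OF that(1), of x e] act_zero[OF that(1)]
    unfolding W_def by simp
  ultimately have "FSop_submodule V act W"
    unfolding FSop_submodule_def W_def by blast
  moreover have "nsmul e x = 0" if "(n, x) \<in> G" for n x
  proof -
    have "e = (\<Prod>g\<in>G - {(n, x)}. ord g) * ord (n, x)"
      using that G(1) unfolding e_def by (simp add: prod.remove mult.commute)
    then show ?thesis using ord[OF that] by (simp add: nsmul_mult)
  qed
  then have "\<forall>(n, x)\<in>G. x \<in> W n" using G(2) by (auto simp: W_def)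
  ultimately have "W n = V n" for n using gen by blast
  with \<open>e \<ge> 1\<close> show ?thesis unfolding W_def by blast
qed

end

subsection \<open>The free module on a finite generating set\<close>

type_synonym 'm basis_elt = "(nat \<times> 'm) \<times> nat list"

text \<open>A generator \<open>(d, x)\<close> spans a quotient of the free module whose basis in degree \<open>n\<close>
  consists of the surjections \<open>[n] \<rightarrow> [d]\<close>, written as words.\<close>

locale FSop_mod_gen = FSop_mod +
  fixes G :: "(nat \<times> 'm::ab_group_add) set"
  assumes finite_G: "finite G"
    and G_in: "\<And>d x. (d, x) \<in> G \<Longrightarrow> x \<in> V d"
    and G_generates: "\<And>W n. FSop_submodule V act W \<Longrightarrow> (\<And>d x. (d, x) \<in> G \<Longrightarrow> x \<in> W d) \<Longrightarrow>
      W n = V n"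
begin

definition free_basis :: "nat \<Rightarrow> 'm basis_elt set" where
  "free_basis n = {b. fst b \<in> G \<and> length (snd b) = n \<and> set (snd b) = {1..fst (fst b)}}"

definition basis_vec :: "nat \<Rightarrow> 'm basis_elt \<Rightarrow> 'm" where
  "basis_vec n b = act n (fst (fst b)) (word_fun (snd b)) (snd (fst b))"

definition comb :: "nat \<Rightarrow> ('m basis_elt \<Rightarrow> int) \<Rightarrow> 'm" where
  "comb n c = (\<Sum>b\<in>free_basis n. zsmul (c b) (basis_vec n b))"

definition basis_precomp :: "(nat \<Rightarrow> nat) \<Rightarrow> nat \<Rightarrow> 'm basis_elt \<Rightarrow> 'm basis_elt" where
  "basis_precomp h m b = (fst b, word_comp (snd b) h m)"

definition coeff_pullback ::
    "nat \<Rightarrow> nat \<Rightarrow> (nat \<Rightarrow> nat) \<Rightarrow> ('m basis_elt \<Rightarrow> int) \<Rightarrow> 'm basis_elt \<Rightarrow> int" where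
  "coeff_pullback n m h c b' = (\<Sum>b\<in>{b \<in> free_basis n. basis_precomp h m b = b'}. c b)"

lemma finite_free_basis: "finite (free_basis n)"
proof (rule finite_subset)
  show "free_basis n \<subseteq> (\<Union>g\<in>G. {g} \<times> {w. set w \<subseteq> {1..fst g} \<and> length w = n})"
    unfolding free_basis_def by auto
  show "finite (\<Union>g\<in>G. {g} \<times> {w. set w \<subseteq> {1..fst g} \<and> length w = n})"
    using finite_G by (auto intro!: finite_lists_length_eq)
qed

lemma length_free_basis: "b \<in> free_basis n \<Longrightarrow> length (snd b) = n"
  by (simp add: free_basis_def)

lemma FS_mor_free_basis: "b \<in> free_basis n \<Longrightarrow> FS_mor n (fst (fst b)) (word_fun (snd b))"
  unfolding free_basis_def using FS_mor_word_fun by fastforce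

lemma free_basis_gen_in: "b \<in> free_basis n \<Longrightarrow> snd (fst b) \<in> V (fst (fst b))"
  using G_in by (auto simp: free_basis_def)

lemma basis_vec_in: "b \<in> free_basis n \<Longrightarrow> basis_vec n b \<in> V n"
  unfolding basis_vec_def using FS_mor_free_basis free_basis_gen_in act_in by blast

lemma comb_in: "comb n c \<in> V n"
  unfolding comb_def by (intro subgrp_sum[OF subgrp_V] subgrp_zsmul[OF subgrp_V] basis_vec_in)

lemma comb_cong: "(\<And>b. b \<in> free_basis n \<Longrightarrow> c b = c' b) \<Longrightarrow> comb n c = comb n c'"
  unfolding comb_def by (rule sum.cong) auto

lemma comb_zero [simp]: "comb n (\<lambda>b. 0) = 0"
  by (simp add: comb_def)

lemma comb_add: "comb n (\<lambda>b. c1 b + c2 b) = comb n c1 + comb n c2"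
  unfolding comb_def by (simp add: zsmul_add_left sum.distrib)

lemma comb_uminus: "comb n (\<lambda>b. - c b) = - comb n c"
  unfolding comb_def by (simp add: zsmul_minus_left sum_negf)

lemma comb_scale: "comb n (\<lambda>b. q * c b) = zsmul q (comb n c)"
  unfolding comb_def by (simp add: zsmul_mult zsmul_sum_right)

lemma comb_diff_scale: "comb n (\<lambda>b. c1 b - q * c2 b) = comb n c1 - zsmul q (comb n c2)"
  using comb_add[of n c1 "\<lambda>b. - (q * c2 b)"] comb_uminus[of n "\<lambda>b. q * c2 b"] comb_scale[of n q c2]
  by simp

lemma basis_precomp_in: "FS_mor m n h \<Longrightarrow> b \<in> free_basis n \<Longrightarrow> basis_precomp h m b \<in> free_basis m"
  by (auto simp: free_basis_def basis_precomp_def set_word_comp)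

lemma basis_vec_precomp:
  assumes h: "FS_mor m n h" and b: "b \<in> free_basis n"
  shows "basis_vec m (basis_precomp h m b) = act m n h (basis_vec n b)"
proof -
  have "FS_mor m (fst (fst b)) (word_fun (word_comp (snd b) h m))"
    using FS_mor_free_basis[OF basis_precomp_in[OF h b]] by (simp add: basis_precomp_def)
  then have "basis_vec m (basis_precomp h m b) =
      act m (fst (fst b)) (word_fun (snd b) \<circ> h) (snd (fst b))"
    unfolding basis_vec_def basis_precomp_def fst_conv snd_conv
    by (rule act_cong) (simp_all add: word_fun_word_comp free_basis_gen_in[OF b])
  also have "\<dots> = act m n h (basis_vec n b)"
    unfolding basis_vec_def by (rule act_comp[OF h FS_mor_free_basis[OF b] free_basis_gen_in[OF b]])
  finally show ?thesis .
qed

lemma comb_coeff_pullback: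
  assumes h: "FS_mor m n h"
  shows "comb m (coeff_pullback n m h c) = act m n h (comb n c)"
proof -
  have "comb m (coeff_pullback n m h c) =
      (\<Sum>b'\<in>free_basis m. \<Sum>b\<in>{b \<in> free_basis n. basis_precomp h m b = b'}. zsmul (c b) (basis_vec m b'))"
    unfolding comb_def coeff_pullback_def by (simp add: zsmul_sum_left)
  also have "\<dots> = (\<Sum>b'\<in>free_basis m. \<Sum>b\<in>{b \<in> free_basis n. basis_precomp h m b = b'}.
      zsmul (c b) (basis_vec m (basis_precomp h m b)))"
    by (intro sum.cong) auto
  also have "\<dots> = (\<Sum>b\<in>free_basis n. zsmul (c b) (basis_vec m (basis_precomp h m b)))"
    by (rule sum.group[OF finite_free_basis finite_free_basis]) (use basis_precomp_in[OF h] in auto)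
  also have "\<dots> = (\<Sum>b\<in>free_basis n. act m n h (zsmul (c b) (basis_vec n b)))"
    by (intro sum.cong) (simp_all add: basis_vec_precomp[OF h]
        additive_on_zsmul[OF subgrp_V act_additive[OF h] basis_vec_in])
  also have "\<dots> = act m n h (comb n c)"
    unfolding comb_def
    by (rule additive_on_sum[OF subgrp_V act_additive[OF h], symmetric])
      (intro subgrp_zsmul[OF subgrp_V] basis_vec_in)
  finally show ?thesis .
qed

lemma comb_generator:
  assumes "(d, x) \<in> G"
  shows "comb d (\<lambda>b. if b = ((d, x), [1..<Suc d]) then 1 else 0) = x"
proof -
  define b0 where "b0 = ((d, x), [1..<Suc d])"
  have b0: "b0 \<in> free_basis d"
    using assms by (simp add: free_basis_def b0_def atLeastLessThanSuc_atLeastAtMost del: upt_Suc)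
  have "comb d (\<lambda>b. if b = b0 then 1 else 0) = (\<Sum>b\<in>free_basis d. if b = b0 then basis_vec d b else 0)"
    unfolding comb_def by (rule sum.cong) auto
  also have "\<dots> = basis_vec d b0" using b0 finite_free_basis by (simp add: sum.delta')
  also have "\<dots> = act d d id x"
  proof -
    have "FS_mor d d (word_fun [1..<Suc d])"
      using FS_mor_free_basis[OF b0] by (simp add: b0_def del: upt_Suc)
    moreover have "word_fun [1..<Suc d] i = id i" if "i \<in> {1..d}" for i
      using that by (simp add: word_fun_def nth_upt del: upt_Suc)
    ultimately have "act d d (word_fun [1..<Suc d]) x = act d d id x"
      using G_in[OF assms] by (rule act_cong)
    then show ?thesis by (simp add: basis_vec_def b0_def del: upt_Suc)
  qed
  also have "\<dots> = x" using act_id G_in[OF assms] by blast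
  finally show ?thesis unfolding b0_def .
qed

lemma comb_surj:
  assumes "x \<in> V n"
  obtains c where "\<forall>b. b \<notin> free_basis n \<longrightarrow> c b = 0" "comb n c = x"
proof -
  define U where "U n = range (comb n)" for n
  have "subgrp (U n)" for n
    unfolding subgrp_def U_def
  proof (intro conjI ballI)
    show "0 \<in> range (comb n)" using comb_zero[of n] by (metis rangeI)
  next
    fix x y assume "x \<in> range (comb n)" "y \<in> range (comb n)"
    then obtain c1 c2 where "x = comb n c1" "y = comb n c2" by blast
    then show "x + y \<in> range (comb n)" using comb_add[of n c1 c2] by (metis rangeI)
  next
    fix x assume "x \<in> range (comb n)"
    then obtain c where "x = comb n c" by blast
    then show "- x \<in> range (comb n)" using comb_uminus[of n c] by (metis rangeI)
  qed
  moreover have "act a b f x \<in> U a" if f: "FS_mor a b f" and x: "x \<in> U b" for a b f x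
  proof -
    obtain c where "x = comb b c" using x unfolding U_def by blast
    then have "act a b f x = comb a (coeff_pullback b a f c)" by (simp add: comb_coeff_pullback[OF f])
    then show ?thesis unfolding U_def by simp
  qed
  moreover have "U n \<subseteq> V n" for n unfolding U_def using comb_in by blast
  ultimately have "FSop_submodule V act U"
    unfolding FSop_submodule_def by blast
  moreover have "x \<in> U d" if "(d, x) \<in> G" for d x
    using comb_generator[OF that] unfolding U_def by (metis rangeI)
  ultimately have "U n = V n" by (rule G_generates)
  then have "x \<in> U n" using assms by simp
  then obtain c where c: "comb n c = x" unfolding U_def by blast
  let ?c = "\<lambda>b. if b \<in> free_basis n then c b else 0"
  show ?thesis
  proof (rule that)
    show "\<forall>b. b \<notin> free_basis n \<longrightarrow> ?c b = 0" by simp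
    have "comb n ?c = comb n c" by (rule comb_cong) simp
    with c show "comb n ?c = x" by simp
  qed
qed

end

context FSop_mod_gen
begin

definition basis_key :: "'m basis_elt \<Rightarrow> nat \<times> nat list" where
  "basis_key b = (to_nat_on G (fst b), snd b)"

definition leading_term :: "nat \<Rightarrow> ('m basis_elt \<Rightarrow> int) \<Rightarrow> 'm basis_elt \<Rightarrow> bool" where
  "leading_term n c b \<longleftrightarrow>
     b \<in> free_basis n \<and> c b \<noteq> 0 \<and> (\<forall>b'\<in>free_basis n. basis_key b < basis_key b' \<longrightarrow> c b' = 0)"

lemma basis_key_inj:
  "b1 \<in> free_basis n \<Longrightarrow> b2 \<in> free_basis n' \<Longrightarrow> basis_key b1 = basis_key b2 \<Longrightarrow> b1 = b2"
  using inj_on_to_nat_on[OF countable_finite[OF finite_G]]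
  unfolding basis_key_def free_basis_def inj_on_def by (simp add: prod_eq_iff)

lemma basis_key_precomp_less:
  assumes h: "FS_mor m n h" "ordered_map m h" and b: "b1 \<in> free_basis n" "b2 \<in> free_basis n"
    and less: "basis_key b1 < basis_key b2"
  shows "basis_key (basis_precomp h m b1) < basis_key (basis_precomp h m b2)"
proof (cases "to_nat_on G (fst b1) < to_nat_on G (fst b2)")
  case True
  then show ?thesis by (simp add: basis_key_def basis_precomp_def)
next
  case False
  with less have "to_nat_on G (fst b1) = to_nat_on G (fst b2)" "snd b1 < snd b2"
    by (auto simp: basis_key_def)
  moreover have "word_comp (snd b1) h m < word_comp (snd b2) h m"
    using word_comp_strict_mono[OF h _ _ \<open>snd b1 < snd b2\<close>] b by (simp add: length_free_basis)
  ultimately show ?thesis by (simp add: basis_key_def basis_precomp_def)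
qed

lemma basis_precomp_inj:
  assumes h: "FS_mor m n h" "ordered_map m h" and b: "b1 \<in> free_basis n" "b2 \<in> free_basis n"
    and eq: "basis_precomp h m b1 = basis_precomp h m b2"
  shows "b1 = b2"
  using basis_key_precomp_less[OF h b] basis_key_precomp_less[OF h b(2,1)] basis_key_inj[OF b] eq
  by (metis less_linear less_irrefl)

lemma leading_term_coeff_pullback:
  assumes h: "FS_mor m n h" "ordered_map m h" and lead: "leading_term n c b"
  shows "leading_term m (coeff_pullback n m h c) (basis_precomp h m b)"
    and "coeff_pullback n m h c (basis_precomp h m b) = c b"
proof -
  have b: "b \<in> free_basis n" using lead by (simp add: leading_term_def)
  have "{z \<in> free_basis n. basis_precomp h m z = basis_precomp h m b} = {b}"
    using basis_precomp_inj[OF h _ b] b by auto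
  then show val: "coeff_pullback n m h c (basis_precomp h m b) = c b"
    by (simp add: coeff_pullback_def)
  have "coeff_pullback n m h c b' = 0"
    if b': "b' \<in> free_basis m" "basis_key (basis_precomp h m b) < basis_key b'" for b'
    unfolding coeff_pullback_def
  proof (rule sum.neutral, intro ballI)
    fix z assume z: "z \<in> {z \<in> free_basis n. basis_precomp h m z = b'}"
    show "c z = 0"
    proof (rule ccontr)
      assume "c z \<noteq> 0"
      then have "\<not> basis_key b < basis_key z" using lead z by (auto simp: leading_term_def)
      moreover have "z \<noteq> b" using z b' by auto
      then have "basis_key z \<noteq> basis_key b" using basis_key_inj b z by blast
      ultimately have "basis_key z < basis_key b" by auto
      then have "basis_key b' < basis_key (basis_precomp h m b)"
        using basis_key_precomp_less[OF h _ b, of z] z by simp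
      then show False using b' by simp
    qed
  qed
  then show "leading_term m (coeff_pullback n m h c) (basis_precomp h m b)"
    using val lead basis_precomp_in[OF h(1) b] by (simp add: leading_term_def)
qed

end

context FSop_mod_gen
begin

lemma leading_term_exists:
  assumes "b \<in> free_basis n" "c b \<noteq> 0"
  obtains b1 where "leading_term n c b1"
proof -
  define supp where "supp = {b \<in> free_basis n. c b \<noteq> 0}"
  have "finite supp" using finite_free_basis by (simp add: supp_def)
  moreover have "supp \<noteq> {}" using assms unfolding supp_def by blast
  ultimately have "Max (basis_key ` supp) \<in> basis_key ` supp" by simp
  then obtain b1 where b1: "b1 \<in> supp" "basis_key b1 = Max (basis_key ` supp)" by (rule imageE) simp
  have "c b' = 0" if "b' \<in> free_basis n" "basis_key b1 < basis_key b'" for b'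
  proof (rule ccontr)
    assume "c b' \<noteq> 0"
    then have "basis_key b' \<le> basis_key b1" using that(1) b1(2) \<open>finite supp\<close> by (simp add: supp_def)
    with that(2) show False by simp
  qed
  then have "leading_term n c b1" using b1(1) by (simp add: leading_term_def supp_def)
  then show ?thesis by (rule that)
qed

definition lead_rank :: "nat \<Rightarrow> ('m basis_elt \<Rightarrow> int) \<Rightarrow> nat" where
  "lead_rank n c =
     card {b \<in> free_basis n. \<exists>b0\<in>free_basis n. c b0 \<noteq> 0 \<and> basis_key b \<le> basis_key b0}"

lemma lead_rank_less:
  assumes lead: "leading_term n c b1" and "c' b1 = 0"
    and above: "\<And>b. b \<in> free_basis n \<Longrightarrow> basis_key b1 < basis_key b \<Longrightarrow> c' b = 0"
  shows "lead_rank n c' < lead_rank n c"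
proof -
  let ?A = "\<lambda>c. {b \<in> free_basis n. \<exists>b0\<in>free_basis n. c b0 \<noteq> 0 \<and> basis_key b \<le> basis_key b0}"
  let ?B = "{b \<in> free_basis n. basis_key b < basis_key b1}"
  have b1: "b1 \<in> free_basis n" "c b1 \<noteq> 0" using lead by (simp_all add: leading_term_def)
  have "basis_key b0 < basis_key b1" if "b0 \<in> free_basis n" "c' b0 \<noteq> 0" for b0
  proof -
    have "b0 \<noteq> b1" using that \<open>c' b1 = 0\<close> by auto
    then have "basis_key b0 \<noteq> basis_key b1" using basis_key_inj[OF that(1) b1(1)] by blast
    moreover have "\<not> basis_key b1 < basis_key b0" using above that by blast
    ultimately show ?thesis by simp
  qed
  then have "?A c' \<subseteq> ?B" by (auto intro: le_less_trans)
  then have "card (?A c') \<le> card ?B" by (intro card_mono) (simp_all add: finite_free_basis)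
  moreover have "?B \<subset> ?A c"
  proof
    show "?B \<subseteq> ?A c" using b1 by (auto intro: less_imp_le)
    show "?B \<noteq> ?A c" using b1 by blast
  qed
  then have "card ?B < card (?A c)" by (intro psubset_card_mono) (simp_all add: finite_free_basis)
  ultimately show ?thesis unfolding lead_rank_def by simp
qed

definition basis_dvd :: "'m basis_elt \<Rightarrow> 'm basis_elt \<Rightarrow> bool" where
  "basis_dvd b b' \<longleftrightarrow> (\<exists>n m h. b \<in> free_basis n \<and> b' \<in> free_basis m \<and> FS_mor m n h \<and>
     ordered_map m h \<and> basis_precomp h m b = b')"

text \<open>Divisibility of basis elements is a well-quasi-order: after fixing the generator, this is
  Higman's lemma applied to the prefix encodings of the words.\<close>

lemma basis_dvd_good:
  fixes s :: "nat \<Rightarrow> 'm basis_elt"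
  assumes s: "\<And>i. \<exists>n. s i \<in> free_basis n"
  shows "\<exists>i j. i < j \<and> basis_dvd (s i) (s j)"
proof -
  have "range (\<lambda>i. fst (s i)) \<subseteq> G" using s by (auto simp: free_basis_def)
  then have "finite (range (\<lambda>i. fst (s i)))" using finite_G by (rule finite_subset)
  then obtain i0 where "infinite {i. fst (s i) = fst (s i0)}"
    using pigeonhole_infinite[of UNIV "\<lambda>i. fst (s i)"] by auto
  then obtain g where inf: "infinite {i. fst (s i) = g}" by blast
  define \<phi> where "\<phi> = enumerate {i. fst (s i) = g}"
  have \<phi>: "strict_mono \<phi>" unfolding \<phi>_def using inf by (rule strict_mono_enumerate)
  have gen: "fst (s (\<phi> k)) = g" for k using enumerate_in_set[OF inf] unfolding \<phi>_def by simp
  have letters: "set (snd (s (\<phi> k))) = {1..fst g}" for k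
    using s[of "\<phi> k"] gen[of k] by (auto simp: free_basis_def)
  have "\<exists>i j. i < j \<and> subseq (prefix_enc (snd (s (\<phi> i)))) (prefix_enc (snd (s (\<phi> j))))"
  proof (rule higman)
    show "set (prefix_enc (snd (s (\<phi> i)))) \<subseteq> {1..fst g} \<times> Pow {1..fst g}" for i
      using set_prefix_enc[of "snd (s (\<phi> i))"] letters[of i] by simp
  qed simp
  then obtain i j where "i < j" and emb: "subseq (prefix_enc (snd (s (\<phi> i)))) (prefix_enc (snd (s (\<phi> j))))"
    by blast
  obtain h where h: "FS_mor (length (snd (s (\<phi> j)))) (length (snd (s (\<phi> i)))) h"
    "ordered_map (length (snd (s (\<phi> j)))) h"
    "word_comp (snd (s (\<phi> i))) h (length (snd (s (\<phi> j)))) = snd (s (\<phi> j))"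
    using ordered_surj_of_prefix_enc_emb[OF _ emb] letters by metis
  obtain n m where "s (\<phi> i) \<in> free_basis n" "s (\<phi> j) \<in> free_basis m" using s by blast
  moreover from this have "n = length (snd (s (\<phi> i)))" "m = length (snd (s (\<phi> j)))"
    by (simp_all add: length_free_basis)
  moreover have "basis_precomp h m (s (\<phi> i)) = s (\<phi> j)"
    using h(3) gen[of i] gen[of j] \<open>m = _\<close> by (simp add: basis_precomp_def prod_eq_iff)
  ultimately have "basis_dvd (s (\<phi> i)) (s (\<phi> j))"
    unfolding basis_dvd_def using h(1,2) by blast
  moreover have "\<phi> i < \<phi> j" using \<phi> \<open>i < j\<close> by (simp add: strict_mono_less)
  ultimately show ?thesis by blast
qed

end

subsection \<open>Leading coefficients of a submodule\<close>

locale FSop_mod_gen_sub = FSop_mod_gen V act G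
  for V :: "nat \<Rightarrow> 'm::ab_group_add set" and act and G +
  fixes K :: "nat \<Rightarrow> 'm set"
  assumes submodule_K: "FSop_submodule V act K"
begin

lemma subgrp_K: "subgrp (K n)"
  using submodule_K by (simp add: FSop_submodule_def)

lemma act_in_K: "FS_mor a b f \<Longrightarrow> x \<in> K b \<Longrightarrow> act a b f x \<in> K a"
  using submodule_K by (simp add: FSop_submodule_def)

definition K_coeffs :: "nat \<Rightarrow> ('m basis_elt \<Rightarrow> int) set" where
  "K_coeffs n = {c. (\<forall>b. b \<notin> free_basis n \<longrightarrow> c b = 0) \<and> comb n c \<in> K n}"

lemma K_coeffs_diff_scale:
  assumes "c1 \<in> K_coeffs n" "c2 \<in> K_coeffs n"
  shows "(\<lambda>b. c1 b - q * c2 b) \<in> K_coeffs n"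
proof -
  have "comb n c1 \<in> K n" "comb n c2 \<in> K n" using assms by (simp_all add: K_coeffs_def)
  then have "comb n c1 + - zsmul q (comb n c2) \<in> K n"
    using subgrp_K[of n] subgrp_zsmul[OF subgrp_K] unfolding subgrp_def by blast
  then show ?thesis using assms by (simp add: K_coeffs_def comb_diff_scale)
qed

lemma K_coeffs_uminus: "c \<in> K_coeffs n \<Longrightarrow> (\<lambda>b. - c b) \<in> K_coeffs n"
  using K_coeffs_diff_scale[of c n c 2] by simp

lemma K_coeffs_coeff_pullback:
  assumes h: "FS_mor m n h" and c: "c \<in> K_coeffs n"
  shows "coeff_pullback n m h c \<in> K_coeffs m"
proof -
  have "coeff_pullback n m h c b' = 0" if "b' \<notin> free_basis m" for b'
  proof -
    have empty: "{b \<in> free_basis n. basis_precomp h m b = b'} = {}"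
      using basis_precomp_in[OF h] that by auto
    show ?thesis by (simp only: coeff_pullback_def empty sum.empty)
  qed
  moreover have "comb m (coeff_pullback n m h c) \<in> K m"
    unfolding comb_coeff_pullback[OF h] using c by (intro act_in_K[OF h]) (simp add: K_coeffs_def)
  ultimately show ?thesis by (simp add: K_coeffs_def)
qed

text \<open>Together with \<open>0\<close>, the leading coefficients at \<open>b\<close> form an ideal of \<open>\<int>\<close>, whose positive
  generator is \<open>min_lead_coeff b\<close>.\<close>

definition lead_coeffs :: "'m basis_elt \<Rightarrow> int set" where
  "lead_coeffs b =
     {c b | c. c \<in> K_coeffs (length (snd b)) \<and> leading_term (length (snd b)) c b}"

definition lead_terms :: "'m basis_elt set" where
  "lead_terms = {b. lead_coeffs b \<noteq> {}}"

definition min_lead_coeff :: "'m basis_elt \<Rightarrow> nat" where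
  "min_lead_coeff b = (LEAST k. 0 < k \<and> int k \<in> lead_coeffs b)"

lemma lead_terms_free_basis: "b \<in> lead_terms \<Longrightarrow> b \<in> free_basis (length (snd b))"
  by (auto simp: lead_terms_def lead_coeffs_def leading_term_def)

lemma min_lead_coeff:
  assumes "b \<in> lead_terms"
  shows "0 < min_lead_coeff b" "int (min_lead_coeff b) \<in> lead_coeffs b"
proof -
  let ?n = "length (snd b)"
  obtain c where c: "c \<in> K_coeffs ?n" "leading_term ?n c b"
    using assms by (auto simp: lead_terms_def lead_coeffs_def)
  have "leading_term ?n (\<lambda>b. - c b) b" using c(2) by (simp add: leading_term_def)
  then have "- c b \<in> lead_coeffs b" using K_coeffs_uminus[OF c(1)] by (auto simp: lead_coeffs_def)
  moreover have "c b \<in> lead_coeffs b" using c by (auto simp: lead_coeffs_def)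
  moreover have "int (nat \<bar>c b\<bar>) = c b \<or> int (nat \<bar>c b\<bar>) = - c b" by linarith
  ultimately have "int (nat \<bar>c b\<bar>) \<in> lead_coeffs b" by (elim disjE) (simp_all only:)
  moreover have "0 < nat \<bar>c b\<bar>" using c(2) by (simp add: leading_term_def)
  ultimately have "0 < nat \<bar>c b\<bar> \<and> int (nat \<bar>c b\<bar>) \<in> lead_coeffs b" by blast
  then have "0 < min_lead_coeff b \<and> int (min_lead_coeff b) \<in> lead_coeffs b"
    unfolding min_lead_coeff_def by (rule LeastI)
  then show "0 < min_lead_coeff b" "int (min_lead_coeff b) \<in> lead_coeffs b" by simp_all
qed

lemma min_lead_coeff_le: "0 < k \<Longrightarrow> int k \<in> lead_coeffs b \<Longrightarrow> min_lead_coeff b \<le> k"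
  unfolding min_lead_coeff_def by (rule Least_le) simp

lemma min_lead_coeff_dvd:
  assumes b: "b \<in> lead_terms" and z: "z \<in> lead_coeffs b"
  shows "int (min_lead_coeff b) dvd z"
proof (rule ccontr)
  let ?n = "length (snd b)" and ?g = "int (min_lead_coeff b)"
  assume "\<not> ?g dvd z"
  then have r: "z mod ?g \<noteq> 0" by (simp add: dvd_eq_mod_eq_0)
  obtain c where c: "c \<in> K_coeffs ?n" "leading_term ?n c b" "z = c b"
    using z unfolding lead_coeffs_def by blast
  obtain c0 where c0: "c0 \<in> K_coeffs ?n" "leading_term ?n c0 b" "?g = c0 b"
    using min_lead_coeff(2)[OF b] unfolding lead_coeffs_def by blast
  have g_pos: "0 < ?g" using min_lead_coeff(1)[OF b] by simp
  define c' where "c' = (\<lambda>b'. c b' - (z div ?g) * c0 b')"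
  have c'_b: "c' b = z mod ?g"
    unfolding c'_def c(3)[symmetric] c0(3)[symmetric] by (rule minus_div_mult_eq_mod)
  have "\<forall>b'\<in>free_basis ?n. basis_key b < basis_key b' \<longrightarrow> c' b' = 0"
    using c(2) c0(2) unfolding leading_term_def c'_def by simp
  then have "leading_term ?n c' b"
    using c(2) r c'_b unfolding leading_term_def by simp
  moreover have "c' \<in> K_coeffs ?n" unfolding c'_def by (rule K_coeffs_diff_scale[OF c(1) c0(1)])
  ultimately have "z mod ?g \<in> lead_coeffs b"
    unfolding lead_coeffs_def c'_b[symmetric] by blast
  moreover have "0 < z mod ?g" using pos_mod_sign[OF g_pos, of z] r by linarith
  ultimately have "?g \<le> z mod ?g"
    using min_lead_coeff_le[of "nat (z mod ?g)" b] by simp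
  moreover have "z mod ?g < ?g" using g_pos by simp
  ultimately show False by linarith
qed
end

subsection \<open>Reduction of leading terms\<close>

context FSop_mod_gen_sub
begin

lemma lead_terms_basis_dvd:
  assumes "basis_dvd b b'" and b: "b \<in> lead_terms"
  shows "b' \<in> lead_terms" "min_lead_coeff b' \<le> min_lead_coeff b"
proof -
  obtain n m h where h: "b \<in> free_basis n" "b' \<in> free_basis m" "FS_mor m n h" "ordered_map m h"
    "basis_precomp h m b = b'"
    using assms(1) unfolding basis_dvd_def by blast
  have len: "length (snd b) = n" "length (snd b') = m" using h(1,2) by (simp_all add: length_free_basis)
  obtain c where c: "c \<in> K_coeffs n" "leading_term n c b" "int (min_lead_coeff b) = c b"
    using min_lead_coeff(2)[OF b] len unfolding lead_coeffs_def by auto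
  have "coeff_pullback n m h c \<in> K_coeffs m" using K_coeffs_coeff_pullback[OF h(3) c(1)] .
  moreover have "leading_term m (coeff_pullback n m h c) b'" "coeff_pullback n m h c b' = c b"
    using leading_term_coeff_pullback[OF h(3,4) c(2)] h(5) by simp_all
  ultimately have "int (min_lead_coeff b) \<in> lead_coeffs b'"
    unfolding lead_coeffs_def len c(3)
    by (intro CollectI exI[of _ "coeff_pullback n m h c"] conjI) simp_all
  then show "b' \<in> lead_terms" "min_lead_coeff b' \<le> min_lead_coeff b"
    using min_lead_coeff_le min_lead_coeff(1)[OF b] by (auto simp: lead_terms_def)
qed

lemma lead_terms_finite_basis:
  "\<exists>F. finite F \<and> F \<subseteq> lead_terms \<and>
     (\<forall>x\<in>lead_terms. \<exists>y\<in>F. basis_dvd y x \<and> min_lead_coeff y = min_lead_coeff x)"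
proof (rule finite_basis_if_good)
  fix s :: "nat \<Rightarrow> 'm basis_elt" assume s: "\<And>i. s i \<in> lead_terms"
  show "\<exists>i j. i < j \<and> basis_dvd (s i) (s j) \<and> min_lead_coeff (s i) = min_lead_coeff (s j)"
  proof (rule good_antitone_eq[where S = lead_terms])
    show "\<exists>i j. i < j \<and> basis_dvd (t i) (t j)" if "\<And>i. t i \<in> lead_terms" for t :: "nat \<Rightarrow> 'm basis_elt"
      using that lead_terms_free_basis by (intro basis_dvd_good) blast
  qed (use s lead_terms_basis_dvd(2) in auto)
qed

definition lead_witness :: "'m basis_elt \<Rightarrow> 'm basis_elt \<Rightarrow> int" where
  "lead_witness y = (SOME c. c \<in> K_coeffs (length (snd y)) \<and> leading_term (length (snd y)) c y \<and>
     c y = int (min_lead_coeff y))"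

lemma lead_witness:
  assumes "y \<in> lead_terms"
  shows "lead_witness y \<in> K_coeffs (length (snd y))" "leading_term (length (snd y)) (lead_witness y) y"
    "lead_witness y y = int (min_lead_coeff y)"
proof -
  have "\<exists>c. c \<in> K_coeffs (length (snd y)) \<and> leading_term (length (snd y)) c y \<and>
      c y = int (min_lead_coeff y)"
    using min_lead_coeff(2)[OF assms] unfolding lead_coeffs_def by auto
  then have "lead_witness y \<in> K_coeffs (length (snd y)) \<and>
      leading_term (length (snd y)) (lead_witness y) y \<and> lead_witness y y = int (min_lead_coeff y)"
    unfolding lead_witness_def by (rule someI_ex)
  then show "lead_witness y \<in> K_coeffs (length (snd y))"
    "leading_term (length (snd y)) (lead_witness y) y" "lead_witness y y = int (min_lead_coeff y)"
    by simp_all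
qed

context
  fixes F and X :: "nat \<Rightarrow> 'm set"
  assumes F: "F \<subseteq> lead_terms"
    and F_basis: "\<And>x. x \<in> lead_terms \<Longrightarrow> \<exists>y\<in>F. basis_dvd y x \<and> min_lead_coeff y = min_lead_coeff x"
    and X: "FSop_submodule K act X"
    and F_in_X: "\<And>y. y \<in> F \<Longrightarrow> comb (length (snd y)) (lead_witness y) \<in> X (length (snd y))"
begin

lemma subgrp_X: "subgrp (X n)"
  using X by (simp add: FSop_submodule_def)

lemma reduce_leading_term:
  assumes c: "c \<in> K_coeffs m" and lead: "leading_term m c b1"
  obtains c' x where "c' \<in> K_coeffs m" "c' b1 = 0"
    "\<And>b. b \<in> free_basis m \<Longrightarrow> basis_key b1 < basis_key b \<Longrightarrow> c' b = 0"
    "x \<in> X m" "comb m c = comb m c' + x"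
proof -
  have b1: "b1 \<in> free_basis m" and len_b1: "length (snd b1) = m"
    using lead by (simp_all add: leading_term_def length_free_basis)
  have "c b1 \<in> lead_coeffs b1" using c lead len_b1 unfolding lead_coeffs_def by blast
  then have b1_lead: "b1 \<in> lead_terms" by (auto simp: lead_terms_def)
  obtain y where y: "y \<in> F" "basis_dvd y b1" "min_lead_coeff y = min_lead_coeff b1"
    using F_basis[OF b1_lead] by blast
  obtain n m' h where h: "y \<in> free_basis n" "b1 \<in> free_basis m'" "FS_mor m' n h"
    "ordered_map m' h" "basis_precomp h m' y = b1"
    using y(2) unfolding basis_dvd_def by blast
  have "m' = m" using h(2) len_b1 by (simp add: length_free_basis)
  note h = h[unfolded this]
  have len_y: "length (snd y) = n" using h(1) by (simp add: length_free_basis)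
  note w = lead_witness[OF subsetD[OF F y(1)], unfolded len_y]
  define hw where "hw = coeff_pullback n m h (lead_witness y)"
  have hw: "hw \<in> K_coeffs m" "leading_term m hw b1" "hw b1 = int (min_lead_coeff b1)"
    using K_coeffs_coeff_pullback[OF h(3) w(1)] leading_term_coeff_pullback[OF h(3,4) w(2)] h(5) w(3) y(3)
    by (simp_all add: hw_def)
  obtain q where q: "c b1 = q * int (min_lead_coeff b1)"
    using min_lead_coeff_dvd[OF b1_lead \<open>c b1 \<in> lead_coeffs b1\<close>] by (metis dvd_def mult.commute)
  show ?thesis
  proof (rule that)
    show "(\<lambda>b. c b - q * hw b) \<in> K_coeffs m" by (rule K_coeffs_diff_scale[OF c hw(1)])
    show "c b1 - q * hw b1 = 0" using q hw(3) by simp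
    show "c b - q * hw b = 0" if "b \<in> free_basis m" "basis_key b1 < basis_key b" for b
      using lead hw(2) that by (simp add: leading_term_def)
    have "comb n (lead_witness y) \<in> X n" using F_in_X[OF y(1)] len_y by simp
    then have "act m n h (comb n (lead_witness y)) \<in> X m"
      using X h(3) by (simp add: FSop_submodule_def)
    then show "zsmul q (comb m hw) \<in> X m"
      unfolding hw_def comb_coeff_pullback[OF h(3)] by (rule subgrp_zsmul[OF subgrp_X])
    show "comb m c = comb m (\<lambda>b. c b - q * hw b) + zsmul q (comb m hw)"
      by (simp add: comb_diff_scale)
  qed
qed

lemma comb_K_coeffs_in_X: "c \<in> K_coeffs m \<Longrightarrow> comb m c \<in> X m"
proof (induction c rule: measure_induct_rule[of "lead_rank m"])
  case (less c)
  show ?case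
  proof (cases "\<exists>b\<in>free_basis m. c b \<noteq> 0")
    case False
    then have "comb m c = comb m (\<lambda>b. 0)" by (intro comb_cong) simp
    then show ?thesis using subgrp_X[of m] by (simp add: subgrp_def)
  next
    case True
    then obtain b1 where lead: "leading_term m c b1" using leading_term_exists by blast
    obtain c' x where c': "c' \<in> K_coeffs m" "c' b1 = 0"
      "\<And>b. b \<in> free_basis m \<Longrightarrow> basis_key b1 < basis_key b \<Longrightarrow> c' b = 0"
      and x: "x \<in> X m" "comb m c = comb m c' + x"
      using reduce_leading_term[OF less.prems lead] by blast
    have "lead_rank m c' < lead_rank m c" using lead c'(2,3) by (rule lead_rank_less)
    then have "comb m c' \<in> X m" using less.IH c'(1) by blast
    then show ?thesis using x subgrp_X[of m] by (simp add: subgrp_def)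
  qed
qed

end

end

context FSop_mod_gen_sub
begin

theorem FSop_fin_gen_K: "FSop_fin_gen K act"
proof -
  obtain F where F: "finite F" "F \<subseteq> lead_terms"
    and F_basis: "\<forall>x\<in>lead_terms. \<exists>y\<in>F. basis_dvd y x \<and> min_lead_coeff y = min_lead_coeff x"
    using lead_terms_finite_basis by blast
  define gens where "gens = (\<lambda>y. (length (snd y), comb (length (snd y)) (lead_witness y))) ` F"
  have "finite gens" using F(1) by (simp add: gens_def)
  moreover have "\<forall>(n, x)\<in>gens. x \<in> K n"
    using lead_witness(1) F(2) by (auto simp: gens_def K_coeffs_def)
  moreover have "\<forall>X. FSop_submodule K act X \<longrightarrow> (\<forall>(n, x)\<in>gens. x \<in> X n) \<longrightarrow> (\<forall>n. X n = K n)"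
  proof (intro allI impI)
    fix X n assume X: "FSop_submodule K act X" and gens_X: "\<forall>(n, x)\<in>gens. x \<in> X n"
    have gens_in_X: "comb (length (snd y)) (lead_witness y) \<in> X (length (snd y))" if "y \<in> F" for y
      using gens_X that by (auto simp: gens_def)
    have "x \<in> X n" if x: "x \<in> K n" for x
    proof -
      have "x \<in> V n" using x submodule_K by (auto simp: FSop_submodule_def)
      then obtain c where "\<forall>b. b \<notin> free_basis n \<longrightarrow> c b = 0" "comb n c = x" by (rule comb_surj)
      with x have c: "c \<in> K_coeffs n" by (simp add: K_coeffs_def)
      have "comb n c \<in> X n" by (rule comb_K_coeffs_in_X[OF F(2) bspec[OF F_basis] X gens_in_X c])
      with \<open>comb n c = x\<close> show ?thesis by simp
    qed
    moreover have "X n \<subseteq> K n" using X by (simp add: FSop_submodule_def)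
    ultimately show "X n = K n" by blast
  qed
  ultimately show ?thesis unfolding FSop_fin_gen_def by (intro exI[of _ gens]) simp
qed

end

theorem FSop_fin_gen_submodule:
  assumes "FSop_module V act" "FSop_fin_gen V act" "FSop_submodule V act K"
  shows "FSop_fin_gen K act"
proof -
  obtain G where G: "finite G" "\<forall>(n, x)\<in>G. x \<in> V n"
    and gen: "\<forall>W. FSop_submodule V act W \<longrightarrow> (\<forall>(n, x)\<in>G. x \<in> W n) \<longrightarrow> (\<forall>n. W n = V n)"
    using assms(2) unfolding FSop_fin_gen_def by blast
  interpret FSop_mod_gen_sub V act G K
  proof unfold_locales
    fix W n assume W: "FSop_submodule V act W" and G_W: "\<And>d x. (d, x) \<in> G \<Longrightarrow> x \<in> W d"
    have "\<forall>(n, x)\<in>G. x \<in> W n" using G_W by auto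
    with W show "W n = V n" using gen by blast
  qed (use assms G in auto)
  show ?thesis by (rule FSop_fin_gen_K)
qed

theorem mainTheorem8:
  fixes V :: "nat \<Rightarrow> 'm::ab_group_add set"
    and act :: "nat \<Rightarrow> nat \<Rightarrow> (nat \<Rightarrow> nat) \<Rightarrow> 'm \<Rightarrow> 'm"
  assumes "FSop_module V act"
    and "FSop_fin_gen V act"
  shows "\<exists>e::nat. e \<ge> 1 \<and> (\<forall>n. \<forall>x\<in>torsion (V n). nsmul e x = 0)"
proof -
  interpret FSop_mod V act by (rule FSop_mod.intro) (rule assms(1))
  let ?T = "\<lambda>n. torsion (V n)"
  have T: "FSop_submodule V act ?T" by (rule FSop_submodule_torsion)
  interpret T: FSop_mod ?T act by (rule FSop_mod.intro) (rule FSop_module_submodule[OF T])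
  have "FSop_fin_gen ?T act" by (rule FSop_fin_gen_submodule[OF assms T])
  moreover have "torsion (?T n) = ?T n" for n by (auto simp: torsion_def)
  ultimately show ?thesis by (rule T.bounded_exponent_if_torsion)
qed

end
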